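(* For the full shift $(\Sigma,\sigma)$, there is a dense Mycielski subset $S\subset\Sigma$ with $\sigma(S)\subset S$ which is Banach scrambled for $\sigma$.
   Context: $\Sigma=\{0,1\}^{\mathbb{Z}_+}$ with the product topology (and a compatible metric $d$) and shift map $\sigma(x)_n=x_{n+1}$. A set $F\subset\mathbb{Z}_+$ has Banach density one if for every $\lambda<1$ there is $N\ge1$ with $\#(F\cap I)\ge\lambda\,\#(I)$ for every interval of integers $I\subset\mathbb{Z}_+$ with $\#(I)\ge N$. A pair $(x,y)$ is Banach proximal if for every $\varepsilon>0$ the set $\{n: d(\sigma^nx,\sigma^ny)<\varepsilon\}$ has Banach density one; it is asymptotic if $d(\sigma^nx,\sigma^ny)\to0$. A subset with at least two points is Banach scrambled if every pair of distinct points in it is Banach proximal but not asymptotic. A Mycielski set is a countable union of Cantor sets. *)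

theory Defs
  imports "HOL-Analysis.Analysis"
begin

definition Sigma_top :: "(nat \<Rightarrow> bool) topology" where
  "Sigma_top = product_topology (\<lambda>_. discrete_topology (UNIV :: bool set)) UNIV"

definition shift :: "(nat \<Rightarrow> bool) \<Rightarrow> (nat \<Rightarrow> bool)" where
  "shift x = (\<lambda>n. x (Suc n))"

definition sdist :: "(nat \<Rightarrow> bool) \<Rightarrow> (nat \<Rightarrow> bool) \<Rightarrow> real" where
  "sdist x y = (if x = y then 0 else (1/2) ^ (LEAST n. x n \<noteq> y n))"

definition banach_density_one :: "nat set \<Rightarrow> bool" where
  "banach_density_one F \<longleftrightarrow>
     (\<forall>l::real. l < 1 \<longrightarrow> (\<exists>N::nat. N \<ge> 1 \<and>
        (\<forall>a m. m \<ge> N \<longrightarrow> real (card (F \<inter> {a..<a+m})) \<ge> l * real m)))"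

definition banach_proximal :: "(nat \<Rightarrow> bool) \<Rightarrow> (nat \<Rightarrow> bool) \<Rightarrow> bool" where
  "banach_proximal x y \<longleftrightarrow>
     (\<forall>e>0. banach_density_one {n. sdist ((shift ^^ n) x) ((shift ^^ n) y) < e})"

definition asymptotic :: "(nat \<Rightarrow> bool) \<Rightarrow> (nat \<Rightarrow> bool) \<Rightarrow> bool" where
  "asymptotic x y \<longleftrightarrow> ((\<lambda>n. sdist ((shift ^^ n) x) ((shift ^^ n) y)) \<longlonglongrightarrow> 0)"

definition banach_scrambled :: "(nat \<Rightarrow> bool) set \<Rightarrow> bool" where
  "banach_scrambled S \<longleftrightarrow> (\<exists>x\<in>S. \<exists>y\<in>S. x \<noteq> y) \<and>
     (\<forall>x\<in>S. \<forall>y\<in>S. x \<noteq> y \<longrightarrow> banach_proximal x y \<and> \<not> asymptotic x y)"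

definition cantor_set :: "(nat \<Rightarrow> bool) set \<Rightarrow> bool" where
  "cantor_set C \<longleftrightarrow> Sigma_top homeomorphic_space (subtopology Sigma_top C)"

definition mycielski_set :: "(nat \<Rightarrow> bool) set \<Rightarrow> bool" where
  "mycielski_set S \<longleftrightarrow> (\<exists>C :: nat \<Rightarrow> (nat \<Rightarrow> bool) set. (\<forall>i. cantor_set (C i)) \<and> S = (\<Union>i. C i))"

end

theory Submission
  imports Defs "HOL-Library.Nat_Bijection" "HOL-Library.Countable"
begin

(* The points of the set are the shifts  point i k b = shift^k (coded i b)  of basic
   sequences indexed by a finite word  word i, a shift amount k and a parameter b in the
   Cantor space.  A basic sequence starts with  word i  and is 0 afterwards except at the
   powers of two, where it carries either a copy of a bit of b or a "tag" bit identifying i;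
   each bit of b and each tag recurs at infinitely many powers of two.

   - Density: every finite word is a prefix of some point.
   - Mycielski: for fixed (i, k) the map b |-> point i k b is continuous and injective on the
     compact space {0,1}^N, so its range is a Cantor set; the set is a countable union of these.
   - Banach proximality: the powers of two have Banach density zero, so every point has
     support of density zero, and sequences differing on a density-zero set are Banach
     proximal.
   - Non-asymptoticity: the tags and the copied bits of b separate distinct points at
     infinitely many positions, where the orbits are at distance 1. *)

lemma funpow_shift: "(shift ^^ k) x n = x (n + k)"
  by (induction k arbitrary: n) (auto simp: shift_def)

lemma topspace_Sigma [simp]: "topspace Sigma_top = UNIV"
  by (simp add: Sigma_top_def)

(* Sequences agreeing on their first L coordinates are within (1/2)^L of each other:
   closeness of two orbits at time n only depends on a window after n. *)
lemma sdist_less: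
  assumes agree: "\<And>t. t < L \<Longrightarrow> x t = y t" and L: "(1/2) ^ L < e"
  shows "sdist x y < e"
proof (cases "x = y")
  case True
  have "(0::real) < (1/2) ^ L" by simp
  with L have "0 < e" by linarith
  then show ?thesis using True by (simp add: sdist_def)
next
  case False
  then obtain n where "x n \<noteq> y n" by (auto simp: fun_eq_iff)
  define m where "m = (LEAST n. x n \<noteq> y n)"
  have "x m \<noteq> y m"
    unfolding m_def by (rule LeastI) fact
  then have "L \<le> m" using agree by (meson not_le)
  then have "(1/2::real) ^ m \<le> (1/2) ^ L" by (rule power_decreasing) auto
  moreover have "sdist x y = (1/2) ^ m" using False by (simp add: sdist_def m_def)
  ultimately show ?thesis using L by linarith
qed

lemma sdist_eq_1:
  assumes "x 0 \<noteq> y 0"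
  shows "sdist x y = 1"
proof -
  have "x \<noteq> y" using assms by auto
  then show ?thesis using assms by (simp add: sdist_def Least_eq_0)
qed

definition density_zero :: "nat set \<Rightarrow> bool" where
  "density_zero A \<longleftrightarrow>
     (\<forall>e>0. \<exists>N. \<forall>a m. N \<le> m \<longrightarrow> real (card (A \<inter> {a..<a+m})) \<le> e * real m)"

lemma density_zero_subset:
  assumes "A \<subseteq> B" and "density_zero B"
  shows "density_zero A"
  unfolding density_zero_def
proof (intro allI impI)
  fix e :: real assume "0 < e"
  then obtain N where N: "\<And>a m. N \<le> m \<Longrightarrow> real (card (B \<inter> {a..<a+m})) \<le> e * real m"
    using assms(2) unfolding density_zero_def by blast
  have "card (A \<inter> {a..<a+m}) \<le> card (B \<inter> {a..<a+m})" for a m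
    using assms(1) by (intro card_mono) auto
  then show "\<exists>N. \<forall>a m. N \<le> m \<longrightarrow> real (card (A \<inter> {a..<a+m})) \<le> e * real m"
    using N by (meson of_nat_le_iff order_trans)
qed

lemma density_zero_Un:
  assumes A: "density_zero A" and B: "density_zero B"
  shows "density_zero (A \<union> B)"
  unfolding density_zero_def
proof (intro allI impI)
  fix e :: real assume "0 < e"
  then have "0 < e / 2" by simp
  then obtain NA NB where
    NA: "\<And>a m. NA \<le> m \<Longrightarrow> real (card (A \<inter> {a..<a+m})) \<le> e / 2 * real m" and
    NB: "\<And>a m. NB \<le> m \<Longrightarrow> real (card (B \<inter> {a..<a+m})) \<le> e / 2 * real m"
    using A B unfolding density_zero_def by meson
  have card_Un: "real (card ((A \<union> B) \<inter> {a..<a+m}))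
          \<le> real (card (A \<inter> {a..<a+m})) + real (card (B \<inter> {a..<a+m}))" for a m
    by (metis Int_Un_distrib2 card_Un_le of_nat_add of_nat_le_iff)
  have "real (card ((A \<union> B) \<inter> {a..<a+m})) \<le> e * real m" if "max NA NB \<le> m" for a m
  proof -
    have "NA \<le> m" "NB \<le> m" using that by auto
    moreover have "e / 2 * real m + e / 2 * real m = e * real m" by simp
    ultimately show ?thesis using NA[of m a] NB[of m a] card_Un[of a m] by linarith
  qed
  then show "\<exists>N. \<forall>a m. N \<le> m \<longrightarrow> real (card ((A \<union> B) \<inter> {a..<a+m})) \<le> e * real m"
    by blast
qed

lemma density_zero_finite:
  assumes "finite A"
  shows "density_zero A"
  unfolding density_zero_def
proof (intro allI impI)
  fix e :: real assume e: "0 < e"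
  obtain N :: nat where N: "real (card A) / e \<le> N" using real_arch_simple by blast
  have "real (card (A \<inter> {a..<a+m})) \<le> e * real m" if "N \<le> m" for a m
  proof -
    have "card (A \<inter> {a..<a+m}) \<le> card A" using assms by (simp add: card_mono)
    moreover have "real (card A) \<le> e * real N"
      using N e by (simp add: divide_le_eq mult.commute)
    moreover have "e * real N \<le> e * real m"
      using that e by simp
    ultimately show ?thesis by linarith
  qed
  then show "\<exists>N. \<forall>a m. N \<le> m \<longrightarrow> real (card (A \<inter> {a..<a+m})) \<le> e * real m" by blast
qed

lemma density_zero_UN:
  assumes "finite T" and "\<And>t. t \<in> T \<Longrightarrow> density_zero (A t)"
  shows "density_zero (\<Union>t\<in>T. A t)"
  using assms by (induction T rule: finite_induct) (auto intro: density_zero_Un density_zero_finite)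

lemma density_zero_translate:
  assumes "density_zero A"
  shows "density_zero {n. n + s \<in> A}"
  unfolding density_zero_def
proof (intro allI impI)
  fix e :: real assume "0 < e"
  then obtain N where N: "\<And>a m. N \<le> m \<Longrightarrow> real (card (A \<inter> {a..<a+m})) \<le> e * real m"
    using assms unfolding density_zero_def by blast
  have translate: "card ({n. n + s \<in> A} \<inter> {a..<a+m}) = card (A \<inter> {a+s..<a+s+m})" for a m
  proof -
    have "(\<lambda>n. n + s) ` ({n. n + s \<in> A} \<inter> {a..<a+m}) = A \<inter> {a+s..<a+s+m}"
    proof (intro equalityI subsetI)
      fix x assume "x \<in> A \<inter> {a+s..<a+s+m}"
      then show "x \<in> (\<lambda>n. n + s) ` ({n. n + s \<in> A} \<inter> {a..<a+m})"
        by (intro image_eqI[of _ _ "x - s"]) auto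
    qed auto
    then show ?thesis by (metis add_right_imp_eq card_image inj_onI)
  qed
  then show "\<exists>N. \<forall>a m. N \<le> m \<longrightarrow> real (card ({n. n + s \<in> A} \<inter> {a..<a+m})) \<le> e * real m"
    using N translate by (metis add.assoc)
qed

lemma banach_density_one_complement:
  assumes "density_zero A"
  shows "banach_density_one (- A)"
  unfolding banach_density_one_def
proof (intro allI impI)
  fix l :: real assume "l < 1"
  then have "0 < 1 - l" by simp
  then obtain N where N: "\<And>a m. N \<le> m \<Longrightarrow> real (card (A \<inter> {a..<a+m})) \<le> (1 - l) * real m"
    using assms unfolding density_zero_def by blast
  have "l * real m \<le> real (card (- A \<inter> {a..<a+m}))" if "max N 1 \<le> m" for a m
  proof -
    have "card {a..<a+m} = card ({a..<a+m} \<inter> A) + card ({a..<a+m} - A)"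
      by (rule card_Int_Diff) simp
    then have "real m = real (card (A \<inter> {a..<a+m})) + real (card (- A \<inter> {a..<a+m}))"
      by (simp add: Int_commute Diff_eq)
    moreover have "N \<le> m" using that by simp
    ultimately show ?thesis using N[of m a] by (simp add: algebra_simps)
  qed
  then show "\<exists>N\<ge>1. \<forall>a m. N \<le> m \<longrightarrow> l * real m \<le> real (card (- A \<inter> {a..<a+m}))"
    by (intro exI[of _ "max N 1"]) auto
qed

lemma banach_density_one_mono:
  assumes "F \<subseteq> G" and "banach_density_one F"
  shows "banach_density_one G"
proof -
  have "card (F \<inter> {a..<a+m}) \<le> card (G \<inter> {a..<a+m})" for a m
    using assms(1) by (intro card_mono) auto
  then show ?thesis
    using assms(2) unfolding banach_density_one_def by (meson of_nat_le_iff order_trans)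
qed

abbreviation powers_of_two :: "nat set" where
  "powers_of_two \<equiv> range (\<lambda>j. 2 ^ j)"

lemma powers_of_two_gap:
  assumes "p \<in> powers_of_two" and "q \<in> powers_of_two" and "p < q"
  shows "2 * p \<le> q"
proof -
  obtain i j where p: "p = 2 ^ i" and q: "q = 2 ^ j" using assms(1,2) by blast
  then have "i < j" using assms(3) by simp
  then have "(2::nat) ^ Suc i \<le> 2 ^ j" by (intro power_increasing) auto
  then show ?thesis using p q by simp
qed

lemma powers_of_two_eq:
  assumes "p \<in> powers_of_two" and "q \<in> powers_of_two" and "p < 2 * q" and "q < 2 * p"
  shows "p = q"
  using powers_of_two_gap[OF assms(1,2)] powers_of_two_gap[OF assms(2,1)] assms(3,4)
  by linarith

lemma card_exponents_below:
  assumes "1 \<le> m"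
  shows "real (card {j. (2::nat) ^ j < m}) \<le> log 2 m + 1"
proof -
  have "{j. (2::nat) ^ j < m} \<subseteq> {..<nat \<lceil>log 2 m\<rceil>}"
  proof
    fix j assume "j \<in> {j. (2::nat) ^ j < m}"
    then have "real (2 ^ j) < real m" by simp
    then have "(2::real) ^ j < real m" by simp
    then have "real j < log 2 m" by (rule less_log_of_power) simp
    then have "real j < of_int \<lceil>log 2 (real m)\<rceil>"
      using le_of_int_ceiling[of "log 2 (real m)"] by linarith
    then have "int j < \<lceil>log 2 (real m)\<rceil>" by (metis of_int_less_iff of_int_of_nat_eq)
    then show "j \<in> {..<nat \<lceil>log 2 m\<rceil>}" by (simp add: zless_nat_eq_int_zless)
  qed
  then have "card {j. (2::nat) ^ j < m} \<le> nat \<lceil>log 2 m\<rceil>"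
    using card_mono[of "{..<nat \<lceil>log 2 m\<rceil>}"] by fastforce
  moreover have "0 \<le> log 2 m" using assms by simp
  ultimately show ?thesis by linarith
qed

(* A window of length m contains at most log2 m + 2 powers of two: those below m are
   few by the previous lemma, and at most one can lie above m by the gap property. *)
lemma card_powers_of_two_interval:
  assumes "1 \<le> m"
  shows "real (card (powers_of_two \<inter> {a..<a+m})) \<le> log 2 m + 2"
proof -
  define P where "P = powers_of_two \<inter> {a..<a+m}"
  have exponents_finite: "finite {j. (2::nat) ^ j < m}"
    by (rule finite_subset[of _ "{..<m}"]) (auto intro: less_trans[OF less_exp])
  have "P \<subseteq> (\<lambda>j. 2 ^ j) ` {j. 2 ^ j < m} \<union> (P \<inter> {m..})"
    unfolding P_def by auto
  moreover have "finite P" unfolding P_def by simp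
  ultimately have "card P \<le> card ((\<lambda>j. (2::nat) ^ j) ` {j. (2::nat) ^ j < m} \<union> (P \<inter> {m..}))"
    using exponents_finite by (intro card_mono) auto
  also have "\<dots> \<le> card ((\<lambda>j. (2::nat) ^ j) ` {j. (2::nat) ^ j < m}) + card (P \<inter> {m..})"
    by (rule card_Un_le)
  also have "\<dots> \<le> card {j. (2::nat) ^ j < m} + 1"
  proof (intro add_mono card_image_le)
    show "finite {j. (2::nat) ^ j < m}" by (rule exponents_finite)
    (* two distinct powers of two that are at least m are at least m apart,
       so they cannot both lie in a window of length m *)
    have "p = q" if "p \<in> P \<inter> {m..}" "q \<in> P \<inter> {m..}" for p q
      using that powers_of_two_eq[of p q] unfolding P_def by auto
    then show "card (P \<inter> {m..}) \<le> 1"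
      using \<open>finite P\<close> by (simp add: card_le_Suc0_iff_eq)
  qed
  finally show ?thesis
    using card_exponents_below[OF assms] unfolding P_def by linarith
qed

(* Since (log2 m + 2)/m tends to 0, the powers of two have density zero. *)
lemma density_zero_powers_of_two: "density_zero powers_of_two"
  unfolding density_zero_def
proof (intro allI impI)
  fix e :: real assume "0 < e"
  have "(\<lambda>m::nat. 2 / real m + log 2 m / real m) \<longlonglongrightarrow> 0 + 0"
    by (intro tendsto_add lim_const_over_n lim_log_over_n)
  then have "eventually (\<lambda>m::nat. 2 / real m + log 2 m / real m < e) sequentially"
    using \<open>0 < e\<close> by (intro order_tendstoD(2)) auto
  then obtain N where N: "\<And>m. N \<le> m \<Longrightarrow> 2 / real m + log 2 m / real m < e"
    unfolding eventually_sequentially by blast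
  have "real (card (powers_of_two \<inter> {a..<a+m})) \<le> e * real m" if "max N 1 \<le> m" for a m
  proof -
    have "0 < real m" using that by simp
    then have "log 2 m + 2 \<le> e * real m"
      using N[of m] that by (simp add: field_simps)
    then show ?thesis using card_powers_of_two_interval[of m a] that by simp
  qed
  then show "\<exists>N. \<forall>a m. N \<le> m \<longrightarrow> real (card (powers_of_two \<inter> {a..<a+m})) \<le> e * real m"
    by blast
qed

(* Key dynamical criterion: if two sequences differ only on a set D of density zero, they
   are Banach proximal.  For e > (1/2)^L the orbits are e-close at every time n outside the
   finite union of the translates D - t, t < L, which still has density zero. *)
lemma banach_proximal_if_density_zero_difference:
  assumes "density_zero {n. x n \<noteq> y n}"
  shows "banach_proximal x y"
  unfolding banach_proximal_def
proof (intro allI impI)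
  fix e :: real assume "0 < e"
  then obtain L where L: "(1/2::real) ^ L < e" using real_arch_pow_inv[of e "1/2"] by auto
  define B where "B = (\<Union>t\<in>{..<L}. {n. n + t \<in> {n. x n \<noteq> y n}})"
  have "density_zero B"
    unfolding B_def by (intro density_zero_UN density_zero_translate assms) simp
  moreover have "- B \<subseteq> {n. sdist ((shift ^^ n) x) ((shift ^^ n) y) < e}"
  proof
    fix n assume "n \<in> - B"
    then have "(shift ^^ n) x t = (shift ^^ n) y t" if "t < L" for t
      using that unfolding B_def by (auto simp: funpow_shift add.commute)
    then show "n \<in> {n. sdist ((shift ^^ n) x) ((shift ^^ n) y) < e}"
      using sdist_less[OF _ L] by blast
  qed
  ultimately show "banach_density_one {n. sdist ((shift ^^ n) x) ((shift ^^ n) y) < e}"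
    by (meson banach_density_one_complement banach_density_one_mono)
qed

(* Conversely, sequences differing at infinitely many coordinates are not asymptotic:
   at each such time the orbits are at distance 1. *)
lemma not_asymptotic_if_infinite_difference:
  assumes "infinite {n. x n \<noteq> y n}"
  shows "\<not> asymptotic x y"
proof
  assume "asymptotic x y"
  then have "eventually (\<lambda>n. sdist ((shift ^^ n) x) ((shift ^^ n) y) < 1) sequentially"
    unfolding asymptotic_def by (intro order_tendstoD(2)) auto
  then obtain N where N: "\<And>n. N \<le> n \<Longrightarrow> sdist ((shift ^^ n) x) ((shift ^^ n) y) < 1"
    unfolding eventually_sequentially by blast
  obtain n where "N \<le> n" and "x n \<noteq> y n"
    using assms unfolding infinite_nat_iff_unbounded_le by blast
  then have "sdist ((shift ^^ n) x) ((shift ^^ n) y) = 1"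
    by (intro sdist_eq_1) (simp add: funpow_shift)
  with N[OF \<open>N \<le> n\<close>] show False by simp
qed

lemma continuous_map_Sigma_coordinatewise:
  assumes "\<And>n. (\<exists>c. \<forall>b. f b n = c) \<or> (\<exists>r. \<forall>b. f b n = b r)"
  shows "continuous_map Sigma_top Sigma_top f"
proof -
  have "continuous_map Sigma_top (discrete_topology UNIV) (\<lambda>b. f b n)" for n
    using assms[of n]
  proof
    assume "\<exists>c. \<forall>b. f b n = c"
    then obtain c where "(\<lambda>b. f b n) = (\<lambda>b. c)" by auto
    then show ?thesis by simp
  next
    assume "\<exists>r. \<forall>b. f b n = b r"
    then obtain r where "(\<lambda>b. f b n) = (\<lambda>b. b r)" by auto
    then show ?thesis unfolding Sigma_top_def
      using continuous_map_product_projection[of r UNIV "\<lambda>_. discrete_topology UNIV"] by simp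
  qed
  then show ?thesis
    by (subst (2) Sigma_top_def) (simp add: continuous_map_componentwise_UNIV)
qed

(* The full shift is a compact Hausdorff space, so a continuous injective self-map is a
   homeomorphism onto its image; the image is therefore a Cantor set. *)
lemma cantor_set_range:
  assumes cont: "continuous_map Sigma_top Sigma_top f" and "inj f"
  shows "cantor_set (range f)"
  unfolding cantor_set_def
proof (rule homeomorphic_map_imp_homeomorphic_space, rule continuous_imp_homeomorphic_map)
  show "compact_space Sigma_top" unfolding Sigma_top_def
    by (simp add: compact_space_product_topology compact_space_discrete_topology)
  show "Hausdorff_space (subtopology Sigma_top (range f))" unfolding Sigma_top_def
    by (simp add: Hausdorff_space_subtopology Hausdorff_space_product_topology)
  show "continuous_map Sigma_top (subtopology Sigma_top (range f)) f"
    using cont by (simp add: continuous_map_in_subtopology)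
  show "inj_on f (topspace Sigma_top)"
    using \<open>inj f\<close> by simp
qed simp

lemma dense_in_Sigma:
  assumes "\<And>w. \<exists>x\<in>S. \<forall>n<length w. x n = w ! n"
  shows "Sigma_top closure_of S = topspace Sigma_top"
  unfolding dense_intersects_open
proof (intro allI impI)
  fix T assume T: "openin Sigma_top T \<and> T \<noteq> {}"
  then obtain z where "z \<in> T" by blast
  have "openin (product_topology (\<lambda>_. discrete_topology (UNIV :: bool set)) UNIV) T"
    using T unfolding Sigma_top_def by simp
  then obtain U where U: "finite {n \<in> UNIV. U n \<noteq> topspace (discrete_topology UNIV)}"
      "z \<in> Pi\<^sub>E UNIV U" "Pi\<^sub>E UNIV U \<subseteq> T"
    using \<open>z \<in> T\<close> unfolding openin_product_topology_alt by blast
  obtain L where L: "{n. U n \<noteq> UNIV} \<subseteq> {..<L}"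
    using U(1) finite_nat_bounded by auto
  obtain x where "x \<in> S" and x: "\<forall>n<L. x n = z n"
    using assms[of "map z [0..<L]"] by auto
  have "x n \<in> U n" for n
  proof (cases "U n = UNIV")
    case False
    then have "x n = z n" using L x by auto
    then show ?thesis using U(2) by (simp add: PiE_iff)
  qed simp
  then have "x \<in> Pi\<^sub>E UNIV U" by (simp add: PiE_iff)
  with \<open>x \<in> S\<close> U(3) show "S \<inter> T \<noteq> {}" by blast
qed

definition word :: "nat \<Rightarrow> bool list" where
  "word = from_nat"

(* The bit placed at position 2^j for the data i, b.  The exponent j is decoded as a pair
   (u, _): an odd u = 2r+1 marks the tag "r = i", an even u = 2r copies the bit b r.  Each
   choice of u recurs for infinitely many exponents. *)
definition label :: "nat \<Rightarrow> (nat \<Rightarrow> bool) \<Rightarrow> nat \<Rightarrow> bool" where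
  "label i b j = (case prod_decode j of (u, _) \<Rightarrow> if odd u then u div 2 = i else b (u div 2))"

definition coded :: "nat \<Rightarrow> (nat \<Rightarrow> bool) \<Rightarrow> nat \<Rightarrow> bool" where
  "coded i b n = (if n < length (word i) then word i ! n else \<exists>j. n = 2 ^ j \<and> label i b j)"

definition point :: "nat \<Rightarrow> nat \<Rightarrow> (nat \<Rightarrow> bool) \<Rightarrow> nat \<Rightarrow> bool" where
  "point i k b = (shift ^^ k) (coded i b)"

lemma point_apply: "point i k b n = coded i b (n + k)"
  by (simp add: point_def funpow_shift)

lemma shift_point: "shift (point i k b) = point i (Suc k) b"
  by (simp add: point_def)

lemma point_prefix: "n < length (word i) \<Longrightarrow> point i 0 b n = word i ! n"
  by (simp add: point_apply coded_def)

lemma label_data: "label i b (prod_encode (2 * r, m)) = b r"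
  by (simp add: label_def)

lemma label_tag: "label i b (prod_encode (2 * r + 1, m)) = (r = i)"
  by (simp add: label_def)

lemma point_at_power:
  assumes "k + length (word i) \<le> 2 ^ j"
  shows "point i k b (2 ^ j - k) = label i b j"
proof -
  have "2 ^ j - k + k = 2 ^ j" using assms by simp
  then show ?thesis using assms by (simp add: point_apply coded_def power_inject_exp)
qed

lemma point_support:
  "point i k b n \<Longrightarrow> n + k < length (word i) \<or> n + k \<in> powers_of_two"
  by (auto simp: point_apply coded_def split: if_splits)

lemma density_zero_point: "density_zero {n. point i k b n}"
proof (rule density_zero_subset)
  show "{n. point i k b n} \<subseteq> {..<length (word i)} \<union> {n. n + k \<in> powers_of_two}"
    using point_support by fastforce
  show "density_zero ({..<length (word i)} \<union> {n. n + k \<in> powers_of_two})"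
    by (intro density_zero_Un density_zero_finite density_zero_translate
        density_zero_powers_of_two) simp
qed

lemma coded_coordinate: "(\<exists>c. \<forall>b. coded i b n = c) \<or> (\<exists>r. \<forall>b. coded i b n = b r)"
proof (cases "n < length (word i) \<or> n \<notin> powers_of_two")
  case True
  then show ?thesis by (auto simp: coded_def)
next
  case False
  then obtain j where n: "n = 2 ^ j" "length (word i) \<le> n" by auto
  obtain u m where j: "prod_decode j = (u, m)" by fastforce
  have "coded i b n = label i b j" for b
    using n by (simp add: coded_def power_inject_exp)
  then show ?thesis using j by (cases "odd u") (auto simp: label_def)
qed

lemma continuous_point: "continuous_map Sigma_top Sigma_top (point i k)"
  by (rule continuous_map_Sigma_coordinatewise) (simp add: point_apply coded_coordinate)

(* Exponents of any prescribed kind can be chosen arbitrarily large. *)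
lemma exponent_large: "m < 2 ^ prod_encode (u, m)"
  using le_prod_encode_2[of m u] less_exp[of "prod_encode (u, m)"] by linarith

(* The bit b r can be read off at the position 2^j - k for j encoding (2r, _), so b is
   determined by the point: each family of points with fixed i, k is a Cantor set. *)
lemma inj_point: "inj (point i k)"
proof (rule injI)
  fix b b' assume eq: "point i k b = point i k b'"
  show "b = b'"
  proof
    fix r
    define j where "j = prod_encode (2 * r, k + length (word i))"
    have large: "k + length (word i) \<le> 2 ^ j"
      unfolding j_def using exponent_large less_imp_le by blast
    have "b r = label i b j" unfolding j_def by (rule label_data[symmetric])
    also have "\<dots> = point i k b (2 ^ j - k)" by (rule point_at_power[OF large, symmetric])
    also have "\<dots> = point i k b' (2 ^ j - k)" by (simp add: eq)
    also have "\<dots> = label i b' j" by (rule point_at_power[OF large])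
    also have "\<dots> = b' r" unfolding j_def by (rule label_data)
    finally show "b r = b' r" .
  qed
qed

(* At a large position 2^j - k where j carries the tag of i, a point with data i', k'
   has bit 1 exactly when (i', k') = (i, k): with a different shift the position is off
   the powers of two, with the same shift the tag is checked. *)
lemma point_tag_unique:
  assumes large: "2 * (k + k') + length (word i') < 2 ^ j" and j: "j = prod_encode (2 * i + 1, m)"
  shows "point i' k' b' (2 ^ j - k) \<longleftrightarrow> (i', k') = (i, k)"
proof (cases "k' = k")
  case True
  have "k' + length (word i') \<le> 2 ^ j" using large by simp
  then have "point i' k' b' (2 ^ j - k) = label i' b' j" using True point_at_power by simp
  also have "\<dots> = (i = i')" unfolding j by (rule label_tag)
  finally show ?thesis using True by auto
next
  case False
  define p where "p = 2 ^ j - k + k'"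
  have "p \<notin> powers_of_two"
  proof
    assume "p \<in> powers_of_two"
    moreover have "p < 2 * 2 ^ j" "2 ^ j < 2 * p" using large unfolding p_def by auto
    ultimately have "p = 2 ^ j" using powers_of_two_eq by blast
    then show False using False large unfolding p_def by auto
  qed
  moreover have "\<not> p < length (word i')" using large unfolding p_def by auto
  ultimately have "\<not> point i' k' b' (2 ^ j - k)"
    using point_support[of i' k' b' "2 ^ j - k"] unfolding p_def by auto
  then show ?thesis using False by auto
qed

(* Distinct points differ at infinitely many positions: either the tags of (i, k) or a
   data bit where b and b' differ are read at arbitrarily large positions. *)
lemma point_differ:
  assumes ne: "(i, k, b) \<noteq> (i', k', b')"
  shows "infinite {n. point i k b n \<noteq> point i' k' b' n}"
  unfolding infinite_nat_iff_unbounded_le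
proof
  fix N
  define m where "m = N + 4 * (k + k') + length (word i) + length (word i')"
  have "\<exists>j. m < 2 ^ j \<and> point i k b (2 ^ j - k) \<noteq> point i' k' b' (2 ^ j - k)"
  proof (cases "(i', k') = (i, k)")
    case True
    with ne obtain r where r: "b r \<noteq> b' r" by auto
    define j where "j = prod_encode (2 * r, m)"
    have "m < 2 ^ j" unfolding j_def by (rule exponent_large)
    moreover have "label i b j = b r" "label i b' j = b' r"
      unfolding j_def by (rule label_data)+
    ultimately have "point i k b (2 ^ j - k) = b r" "point i' k' b' (2 ^ j - k) = b' r"
      using True point_at_power[of k i j] unfolding m_def by auto
    with r \<open>m < 2 ^ j\<close> show ?thesis by auto
  next
    case False
    define j where "j = prod_encode (2 * i + 1, m)"
    have "m < 2 ^ j" unfolding j_def by (rule exponent_large)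
    then have large: "2 * (k + k) + length (word i) < 2 ^ j"
        "2 * (k + k') + length (word i') < 2 ^ j"
      unfolding m_def by auto
    have "point i k b (2 ^ j - k)"
      using point_tag_unique[OF large(1) j_def] by simp
    moreover have "\<not> point i' k' b' (2 ^ j - k)"
      using point_tag_unique[OF large(2) j_def] False by simp
    ultimately show ?thesis using \<open>m < 2 ^ j\<close> by auto
  qed
  then obtain j where "m < 2 ^ j" "point i k b (2 ^ j - k) \<noteq> point i' k' b' (2 ^ j - k)"
    by blast
  then show "\<exists>n\<ge>N. n \<in> {n. point i k b n \<noteq> point i' k' b' n}"
    by (intro exI[of _ "2 ^ j - k"]) (auto simp: m_def)
qed

(* Any two points are Banach proximal, as both have support of density zero. *)
lemma banach_proximal_points: "banach_proximal (point i k b) (point i' k' b')"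
proof (rule banach_proximal_if_density_zero_difference)
  have "{n. point i k b n \<noteq> point i' k' b' n} \<subseteq> {n. point i k b n} \<union> {n. point i' k' b' n}"
    by auto
  then show "density_zero {n. point i k b n \<noteq> point i' k' b' n}"
    by (rule density_zero_subset) (intro density_zero_Un density_zero_point)
qed

definition scrambled_set :: "(nat \<Rightarrow> bool) set" where
  "scrambled_set = (\<Union>n. range (point (fst (prod_decode n)) (snd (prod_decode n))))"

lemma point_in_scrambled_set: "point i k b \<in> scrambled_set"
  unfolding scrambled_set_def by (intro UN_I[of "prod_encode (i, k)"]) auto

lemma scrambled_setE:
  assumes "x \<in> scrambled_set"
  obtains i k b where "x = point i k b"
  using assms unfolding scrambled_set_def by blast

lemma banach_scrambled_scrambled_set: "banach_scrambled scrambled_set"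
  unfolding banach_scrambled_def
proof (intro conjI ballI impI)
  have "infinite {n. point 0 0 (\<lambda>_. False) n \<noteq> point 0 1 (\<lambda>_. False) n}"
    by (rule point_differ) simp
  then obtain n where "point 0 0 (\<lambda>_. False) n \<noteq> point 0 1 (\<lambda>_. False) n"
    using not_finite_existsD by blast
  then have "point 0 0 (\<lambda>_. False) \<noteq> point 0 1 (\<lambda>_. False)" by auto
  then show "\<exists>x\<in>scrambled_set. \<exists>y\<in>scrambled_set. x \<noteq> y"
    using point_in_scrambled_set by blast
next
  fix x y assume "x \<in> scrambled_set" "y \<in> scrambled_set" and "x \<noteq> y"
  obtain i k b where x: "x = point i k b"
    using \<open>x \<in> scrambled_set\<close> by (rule scrambled_setE)
  obtain i' k' b' where y: "y = point i' k' b'"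
    using \<open>y \<in> scrambled_set\<close> by (rule scrambled_setE)
  show "banach_proximal x y"
    unfolding x y by (rule banach_proximal_points)
  have "(i, k, b) \<noteq> (i', k', b')" using \<open>x \<noteq> y\<close> x y by auto
  then show "\<not> asymptotic x y"
    unfolding x y by (intro not_asymptotic_if_infinite_difference point_differ)
qed

theorem mainTheorem6:
  shows "\<exists>S. mycielski_set S \<and> Sigma_top closure_of S = topspace Sigma_top
           \<and> shift ` S \<subseteq> S \<and> banach_scrambled S"
proof (intro exI conjI)
  show "mycielski_set scrambled_set"
    unfolding mycielski_set_def scrambled_set_def
    by (intro exI[of _ "\<lambda>n. range (point (fst (prod_decode n)) (snd (prod_decode n)))"] conjI allI
        cantor_set_range continuous_point inj_point refl)
  show "Sigma_top closure_of scrambled_set = topspace Sigma_top"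
  proof (rule dense_in_Sigma)
    fix w :: "bool list"
    have "\<forall>n<length w. point (to_nat w) 0 (\<lambda>_. False) n = w ! n"
      by (simp add: point_prefix word_def)
    then show "\<exists>x\<in>scrambled_set. \<forall>n<length w. x n = w ! n"
      using point_in_scrambled_set by blast
  qed
  show "shift ` scrambled_set \<subseteq> scrambled_set"
    by (auto elim: scrambled_setE simp: shift_point point_in_scrambled_set)
  show "banach_scrambled scrambled_set"
    by (rule banach_scrambled_scrambled_set)
qed

end
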